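(* For the class of equations $u_t=[E(x,u)u_x]_x+H(x,u)$ (with $E,H$ regarded as arbitrary smooth functions of $(x,u)$, i.e. as additional dependent variables subject to $E_t=H_t=0$), the Lie algebra of infinitesimal equivalence transformations of the form $$Y=\xi(t,x,u)\partial_t+\tau(t,x,u)\partial_x+\varphi(t,x,u)\partial_u+\chi(t,x,u,E,H)\partial_E+\eta(t,x,u,E,H)\partial_H$$ is spanned by $$Y_1=\partial_t,\quad Y_2=\partial_x,\quad Y_3=\partial_u,\quad Y_4=2t\,\partial_t+x\,\partial_x-2H\,\partial_H,$$ $$Y_5=-t\,\partial_t+E\,\partial_E+H\,\partial_H,\quad Y_6=u\,\partial_u+H\,\partial_H.$$
   Context: An equivalence transformation of the class is a non-degenerate point change of the variables $(t,x,u)$, together with a transformation of the arbitrary elements $E,H$, mapping every equation $u_t=[E(x,u)u_x]_x+H(x,u)$ of the class to an equation $\tilde u_{\tilde t}=[\tilde E(\tilde x,\tilde u)\tilde u_{\tilde x}]_{\tilde x}+\tilde H(\tilde x,\tilde u)$ of the same class. Infinitesimal equivalence transformations are the generators $Y$ as displayed whose appropriate prolongation leaves invariant the system $u_t=[Eu_x]_x+H$, $E_t=0$, $H_t=0$. *)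

theory Defs
  imports "HOL-Analysis.Analysis"
begin

text \<open>A function on a Euclidean space is C-infinity: it is continuous and, along every
basis direction, it has a partial derivative everywhere which is again C-infinity
(i.e. all partial derivatives of all orders exist and are continuous).\<close>

coinductive Cinf :: "('a::euclidean_space \<Rightarrow> real) \<Rightarrow> bool" where
  "continuous_on UNIV f \<Longrightarrow>
   (\<And>b. b \<in> Basis \<Longrightarrow> \<exists>g. (\<forall>x. ((\<lambda>s. f (x + s *\<^sub>R b)) has_real_derivative g x) (at 0)) \<and> Cinf g)
   \<Longrightarrow> Cinf f"

text \<open>Coordinates of the jet space: independent variables t, x (and u, which is an
independent variable for the arbitrary elements E, H), second-order jets of u(t,x),
and first-order jets of E(t,x,u), H(t,x,u).\<close>

datatype jv = jT | jX | jU | jUt | jUx | jUtt | jUtx | jUxx | jE | jH | jEt | jEx | jEu | jHt | jHx | jHu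

type_synonym jpt = "jv \<Rightarrow> real"
type_synonym jfun = "jpt \<Rightarrow> real"

definition pd :: "jv \<Rightarrow> jfun \<Rightarrow> jfun" where
  "pd v F p = deriv (\<lambda>s. F (p(v := s))) (p v)"

text \<open>Total derivatives for the equation for u(t,x) (applied to functions of t,x,u,u_t,u_x).\<close>
definition Dt :: "jfun \<Rightarrow> jfun" where
  "Dt F p = pd jT F p + p jUt * pd jU F p + p jUtt * pd jUt F p + p jUtx * pd jUx F p"
definition Dx :: "jfun \<Rightarrow> jfun" where
  "Dx F p = pd jX F p + p jUx * pd jU F p + p jUtx * pd jUt F p + p jUxx * pd jUx F p"

text \<open>Total derivatives for the arbitrary elements E(t,x,u), H(t,x,u)
(applied to functions of t,x,u,E,H).\<close>
definition DtA :: "jfun \<Rightarrow> jfun" where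
  "DtA F p = pd jT F p + p jEt * pd jE F p + p jHt * pd jH F p"
definition DxA :: "jfun \<Rightarrow> jfun" where
  "DxA F p = pd jX F p + p jEx * pd jE F p + p jHx * pd jH F p"
definition DuA :: "jfun \<Rightarrow> jfun" where
  "DuA F p = pd jU F p + p jEu * pd jE F p + p jHu * pd jH F p"

text \<open>Generator Y = xi d_t + tau d_x + phi d_u + chi d_E + eta d_H; its coefficients
in the prolonged vector field, indexed by jet coordinate.\<close>

definition prol_coef ::
  "(real \<Rightarrow> real \<Rightarrow> real \<Rightarrow> real) \<Rightarrow> (real \<Rightarrow> real \<Rightarrow> real \<Rightarrow> real) \<Rightarrow>
   (real \<Rightarrow> real \<Rightarrow> real \<Rightarrow> real) \<Rightarrow>
   (real \<Rightarrow> real \<Rightarrow> real \<Rightarrow> real \<Rightarrow> real \<Rightarrow> real) \<Rightarrow>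
   (real \<Rightarrow> real \<Rightarrow> real \<Rightarrow> real \<Rightarrow> real \<Rightarrow> real) \<Rightarrow> jv \<Rightarrow> jfun" where
  "prol_coef \<xi> \<tau> \<phi> chi eta v =
    (let Xi = (\<lambda>p. \<xi> (p jT) (p jX) (p jU));
         Ta = (\<lambda>p. \<tau> (p jT) (p jX) (p jU));
         Ph = (\<lambda>p. \<phi> (p jT) (p jX) (p jU));
         Ch = (\<lambda>p. chi (p jT) (p jX) (p jU) (p jE) (p jH));
         Eh = (\<lambda>p. eta (p jT) (p jX) (p jU) (p jE) (p jH));
         phi_t = (\<lambda>p. Dt Ph p - p jUt * Dt Xi p - p jUx * Dt Ta p);
         phi_x = (\<lambda>p. Dx Ph p - p jUt * Dx Xi p - p jUx * Dx Ta p)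
     in case v of
        jT \<Rightarrow> Xi | jX \<Rightarrow> Ta | jU \<Rightarrow> Ph
      | jUt \<Rightarrow> phi_t | jUx \<Rightarrow> phi_x
      | jUtt \<Rightarrow> (\<lambda>p. Dt phi_t p - p jUtt * Dt Xi p - p jUtx * Dt Ta p)
      | jUtx \<Rightarrow> (\<lambda>p. Dx phi_t p - p jUtt * Dx Xi p - p jUtx * Dx Ta p)
      | jUxx \<Rightarrow> (\<lambda>p. Dx phi_x p - p jUtx * Dx Xi p - p jUxx * Dx Ta p)
      | jE \<Rightarrow> Ch | jH \<Rightarrow> Eh
      | jEt \<Rightarrow> (\<lambda>p. DtA Ch p - p jEt * DtA Xi p - p jEx * DtA Ta p - p jEu * DtA Ph p)
      | jEx \<Rightarrow> (\<lambda>p. DxA Ch p - p jEt * DxA Xi p - p jEx * DxA Ta p - p jEu * DxA Ph p)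
      | jEu \<Rightarrow> (\<lambda>p. DuA Ch p - p jEt * DuA Xi p - p jEx * DuA Ta p - p jEu * DuA Ph p)
      | jHt \<Rightarrow> (\<lambda>p. DtA Eh p - p jHt * DtA Xi p - p jHx * DtA Ta p - p jHu * DtA Ph p)
      | jHx \<Rightarrow> (\<lambda>p. DxA Eh p - p jHt * DxA Xi p - p jHx * DxA Ta p - p jHu * DxA Ph p)
      | jHu \<Rightarrow> (\<lambda>p. DuA Eh p - p jHt * DuA Xi p - p jHx * DuA Ta p - p jHu * DuA Ph p))"

definition all_jv :: "jv list" where
  "all_jv = [jT, jX, jU, jUt, jUx, jUtt, jUtx, jUxx, jE, jH, jEt, jEx, jEu, jHt, jHx, jHu]"

definition prY ::
  "(real \<Rightarrow> real \<Rightarrow> real \<Rightarrow> real) \<Rightarrow> (real \<Rightarrow> real \<Rightarrow> real \<Rightarrow> real) \<Rightarrow>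
   (real \<Rightarrow> real \<Rightarrow> real \<Rightarrow> real) \<Rightarrow>
   (real \<Rightarrow> real \<Rightarrow> real \<Rightarrow> real \<Rightarrow> real \<Rightarrow> real) \<Rightarrow>
   (real \<Rightarrow> real \<Rightarrow> real \<Rightarrow> real \<Rightarrow> real \<Rightarrow> real) \<Rightarrow> jfun \<Rightarrow> jfun" where
  "prY \<xi> \<tau> \<phi> chi eta F p = sum_list (map (\<lambda>v. prol_coef \<xi> \<tau> \<phi> chi eta v p * pd v F p) all_jv)"

text \<open>u_t = [E u_x]_x + H, i.e. u_t = E u_xx + (E_x + E_u u_x) u_x + H, together with
E_t = 0 and H_t = 0.\<close>
definition Delta1 :: jfun where
  "Delta1 p = p jUt - (p jE * p jUxx + p jEx * p jUx + p jEu * (p jUx)^2 + p jH)"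
definition Delta2 :: jfun where
  "Delta2 p = p jEt"
definition Delta3 :: jfun where
  "Delta3 p = p jHt"

definition on_system :: "jpt \<Rightarrow> bool" where
  "on_system p \<longleftrightarrow> Delta1 p = 0 \<and> Delta2 p = 0 \<and> Delta3 p = 0"

definition inf_equiv_transf ::
  "(real \<Rightarrow> real \<Rightarrow> real \<Rightarrow> real) \<Rightarrow> (real \<Rightarrow> real \<Rightarrow> real \<Rightarrow> real) \<Rightarrow>
   (real \<Rightarrow> real \<Rightarrow> real \<Rightarrow> real) \<Rightarrow>
   (real \<Rightarrow> real \<Rightarrow> real \<Rightarrow> real \<Rightarrow> real \<Rightarrow> real) \<Rightarrow>
   (real \<Rightarrow> real \<Rightarrow> real \<Rightarrow> real \<Rightarrow> real \<Rightarrow> real) \<Rightarrow> bool" where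
  "inf_equiv_transf \<xi> \<tau> \<phi> chi eta \<longleftrightarrow>
     (\<forall>p. on_system p \<longrightarrow>
        prY \<xi> \<tau> \<phi> chi eta Delta1 p = 0 \<and>
        prY \<xi> \<tau> \<phi> chi eta Delta2 p = 0 \<and>
        prY \<xi> \<tau> \<phi> chi eta Delta3 p = 0)"

end

theory Submission
  imports Defs
begin

text \<open>
  The invariance conditions prY Delta_i = 0 on the system are
  polynomial identities in the free jet coordinates u_x, u_xx, u_tx, E_x, E_u, H_x, H_u
  (u_t being eliminated by the equation).  Evaluating them at suitable points of the
  system splits them into the determining equations:
    from Delta2 (E_t = 0):  chi_t = tau_t = phi_t = 0;
    from Delta1, first order:  xi_x = xi_u = tau_u = phi_x = 0,
      chi = E (2 tau_x - xi_t),  eta = H (phi_u - xi_t).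
  Hence xi, tau, phi depend only on t, x, u respectively, chi_t = 0 forces xi_t to be a
  constant k, and Delta1 once more gives tau_xx = phi_uu = 0.  So xi, tau, phi are affine,
  which is exactly the span of Y_1, ..., Y_6; conversely every such generator satisfies
  the invariance conditions by direct computation.
\<close>

type_synonym fun3 = "real \<Rightarrow> real \<Rightarrow> real \<Rightarrow> real"
type_synonym fun5 = "real \<Rightarrow> real \<Rightarrow> real \<Rightarrow> real \<Rightarrow> real \<Rightarrow> real"

definition dt :: "fun3 \<Rightarrow> fun3" where "dt F t x u = deriv (\<lambda>s. F s x u) t"
definition dx :: "fun3 \<Rightarrow> fun3" where "dx F t x u = deriv (\<lambda>s. F t s u) x"
definition du :: "fun3 \<Rightarrow> fun3" where "du F t x u = deriv (\<lambda>s. F t x s) u"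

definition dt5 :: "fun5 \<Rightarrow> fun5" where "dt5 G t x u e h = deriv (\<lambda>s. G s x u e h) t"
definition dx5 :: "fun5 \<Rightarrow> fun5" where "dx5 G t x u e h = deriv (\<lambda>s. G t s u e h) x"
definition du5 :: "fun5 \<Rightarrow> fun5" where "du5 G t x u e h = deriv (\<lambda>s. G t x s e h) u"
definition dE5 :: "fun5 \<Rightarrow> fun5" where "dE5 G t x u e h = deriv (\<lambda>s. G t x u s h) e"
definition dH5 :: "fun5 \<Rightarrow> fun5" where "dH5 G t x u e h = deriv (\<lambda>s. G t x u e s) h"

section \<open>Consequences of smoothness\<close>

text \<open>The coordinate line through y is
  described by a section g y and the coordinate c y of y.\<close>
lemma Cinf_partial:
  fixes f :: "'a::euclidean_space \<Rightarrow> real"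
  assumes "Cinf f" "b \<in> Basis"
    and slice: "\<And>y s. f (y + s *\<^sub>R b) = g y (c y + s)"
  shows "(g y has_real_derivative deriv (g y) (c y)) (at (c y))"
    and "Cinf (\<lambda>y. deriv (g y) (c y))"
proof -
  obtain g' where "\<And>y. ((\<lambda>s. f (y + s *\<^sub>R b)) has_real_derivative g' y) (at 0)"
    and "Cinf g'"
    using assms(1,2) by (cases rule: Cinf.cases) blast
  then have g': "\<And>y. ((\<lambda>s. g y (c y + s)) has_real_derivative g' y) (at 0)"
    by (simp add: slice)
  have "g' y = deriv (g y) (c y)" for y
    using DERIV_imp_deriv[OF g'[of y]] deriv_shift_0[of "g y" "c y"] by (simp add: comp_def)
  then have g'_eq: "g' = (\<lambda>y. deriv (g y) (c y))" by blast
  with \<open>Cinf g'\<close> show "Cinf (\<lambda>y. deriv (g y) (c y))" by simp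
  have "((\<lambda>s. g y (s + c y)) has_real_derivative deriv (g y) (c y)) (at 0)"
    using g'[of y] g'_eq by (simp add: add.commute)
  then show "(g y has_real_derivative deriv (g y) (c y)) (at (c y))"
    using DERIV_shift[of "g y" _ 0 "c y"] by simp
qed

lemma Cinf_dt:
  assumes "Cinf (\<lambda>(t, x, u). F t x u)"
  shows "((\<lambda>s. F s x u) has_real_derivative dt F t x u) (at t)"
  using Cinf_partial(1)[OF assms, of "(1, 0, 0)" "\<lambda>(t, x, u) s. F s x u" fst]
  by (auto simp: Basis_prod_def dt_def case_prod_unfold zero_prod_def)

lemma Cinf_dx:
  assumes "Cinf (\<lambda>(t, x, u). F t x u)"
  shows "((\<lambda>s. F t s u) has_real_derivative dx F t x u) (at x)"
    and "Cinf (\<lambda>(t, x, u). dx F t x u)"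
  using Cinf_partial[OF assms, of "(0, 1, 0)" "\<lambda>(t, x, u) s. F t s u" "fst \<circ> snd"]
  by (auto simp: Basis_prod_def dx_def case_prod_unfold zero_prod_def)

lemma Cinf_du:
  assumes "Cinf (\<lambda>(t, x, u). F t x u)"
  shows "((\<lambda>s. F t x s) has_real_derivative du F t x u) (at u)"
    and "Cinf (\<lambda>(t, x, u). du F t x u)"
  using Cinf_partial[OF assms, of "(0, 0, 1)" "\<lambda>(t, x, u) s. F t x s" "snd \<circ> snd"]
  by (auto simp: Basis_prod_def du_def case_prod_unfold zero_prod_def)

lemma Cinf_dt5:
  assumes "Cinf (\<lambda>(t, x, u, e, h). G t x u e h)"
  shows "((\<lambda>s. G s x u e h) has_real_derivative dt5 G t x u e h) (at t)"
  using Cinf_partial(1)[OF assms, of "(1, 0, 0, 0, 0)" "\<lambda>(t, x, u, e, h) s. G s x u e h" fst]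
  by (auto simp: Basis_prod_def dt5_def case_prod_unfold zero_prod_def)

text \<open>The regularity actually needed for the second prolongation: the first partials
  in x and u have partial derivatives in x and u.\<close>
definition has_partials_xu :: "fun3 \<Rightarrow> bool" where
  "has_partials_xu F \<longleftrightarrow> (\<forall>t x u.
     ((\<lambda>s. F t s u) has_real_derivative dx F t x u) (at x) \<and>
     ((\<lambda>s. F t x s) has_real_derivative du F t x u) (at u))"

definition twice_diff_xu :: "fun3 \<Rightarrow> bool" where
  "twice_diff_xu F \<longleftrightarrow> has_partials_xu (dx F) \<and> has_partials_xu (du F)"

lemma has_partials_xuD:
  assumes "has_partials_xu F"
  shows "((\<lambda>s. F t s u) has_real_derivative dx F t x u) (at x)"
    and "((\<lambda>s. F t x s) has_real_derivative du F t x u) (at u)"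
  using assms by (simp_all add: has_partials_xu_def)

lemma twice_diff_xu_if_Cinf:
  assumes "Cinf (\<lambda>(t, x, u). F t x u)"
  shows "twice_diff_xu F"
  using Cinf_dx(2)[OF assms] Cinf_du(2)[OF assms]
  by (auto simp: twice_diff_xu_def has_partials_xu_def intro: Cinf_dx(1) Cinf_du(1))

lemma twice_diff_xu_second_deriv:
  "twice_diff_xu (\<lambda>t x u. Tau x) \<Longrightarrow> (deriv Tau has_real_derivative deriv (deriv Tau) x) (at x)"
  "twice_diff_xu (\<lambda>t x u. Phi u) \<Longrightarrow> (deriv Phi has_real_derivative deriv (deriv Phi) u) (at u)"
  by (simp_all add: twice_diff_xu_def has_partials_xu_def dx_def du_def)

lemma constant_if_zero_deriv:
  fixes f :: "real \<Rightarrow> real"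
  assumes "\<And>s. (f has_real_derivative f' s) (at s)" and "\<And>s. f' s = 0"
  shows "f a = f b"
  using assms by (metis DERIV_isconst_all)

lemma affine_if_const_deriv:
  fixes f :: "real \<Rightarrow> real"
  assumes "\<And>s. (f has_real_derivative k) (at s)"
  shows "f s = f 0 + k * s"
proof -
  have "((\<lambda>s. f s - k * s) has_real_derivative 0) (at s)" for s
    using assms by (auto intro!: derivative_eq_intros)
  from constant_if_zero_deriv[OF this, of s 0] show ?thesis by simp
qed

lemma deriv_affine: "deriv (\<lambda>s. a + b * s) x = (b::real)" "deriv (\<lambda>s. b * s) x = (b::real)"
  by (auto intro!: DERIV_imp_deriv derivative_eq_intros)

lemma partials_of_vanishing:
  assumes "\<And>t x u. F t x u = 0"
  shows "dx F t x u = 0" and "du F t x u = 0"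
proof -
  have "F = (\<lambda>t x u. 0)" using assms by (simp add: fun_eq_iff)
  then show "dx F t x u = 0" "du F t x u = 0" by (simp_all add: dx_def du_def)
qed

section \<open>The prolonged generator in coordinates\<close>

abbreviation ev3 :: "fun3 \<Rightarrow> jpt \<Rightarrow> real" where
  "ev3 F p \<equiv> F (p jT) (p jX) (p jU)"
abbreviation ev5 :: "fun5 \<Rightarrow> jpt \<Rightarrow> real" where
  "ev5 G p \<equiv> G (p jT) (p jX) (p jU) (p jE) (p jH)"

lemma pd_eqI: "((\<lambda>s. F (p(v := s))) has_real_derivative D) (at (p v)) \<Longrightarrow> pd v F p = D"
  unfolding pd_def by (rule DERIV_imp_deriv)

lemma pd_ev3:
  "pd jT (ev3 F) p = ev3 (dt F) p"
  "pd jX (ev3 F) p = ev3 (dx F) p"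
  "pd jU (ev3 F) p = ev3 (du F) p"
  "v \<noteq> jT \<Longrightarrow> v \<noteq> jX \<Longrightarrow> v \<noteq> jU \<Longrightarrow> pd v (ev3 F) p = 0"
  by (simp_all add: pd_def dt_def dx_def du_def)

lemma pd_ev5:
  "pd jT (ev5 G) p = ev5 (dt5 G) p"
  "pd jX (ev5 G) p = ev5 (dx5 G) p"
  "pd jU (ev5 G) p = ev5 (du5 G) p"
  "pd jE (ev5 G) p = ev5 (dE5 G) p"
  "pd jH (ev5 G) p = ev5 (dH5 G) p"
  "v \<noteq> jT \<Longrightarrow> v \<noteq> jX \<Longrightarrow> v \<noteq> jU \<Longrightarrow> v \<noteq> jE \<Longrightarrow> v \<noteq> jH \<Longrightarrow>
   pd v (ev5 G) p = 0"
  by (simp_all add: pd_def dt5_def dx5_def du5_def dE5_def dH5_def)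

lemma total_derivs_ev3:
  "Dt (ev3 F) p = ev3 (dt F) p + p jUt * ev3 (du F) p"
  "Dx (ev3 F) p = ev3 (dx F) p + p jUx * ev3 (du F) p"
  "DtA (ev3 F) p = ev3 (dt F) p"
  "DxA (ev3 F) p = ev3 (dx F) p"
  "DuA (ev3 F) p = ev3 (du F) p"
  by (simp_all add: Dt_def Dx_def DtA_def DxA_def DuA_def pd_ev3)

lemma total_derivs_ev5:
  "DtA (ev5 G) p = ev5 (dt5 G) p + p jEt * ev5 (dE5 G) p + p jHt * ev5 (dH5 G) p"
  "DxA (ev5 G) p = ev5 (dx5 G) p + p jEx * ev5 (dE5 G) p + p jHx * ev5 (dH5 G) p"
  "DuA (ev5 G) p = ev5 (du5 G) p + p jEu * ev5 (dE5 G) p + p jHu * ev5 (dH5 G) p"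
  by (simp_all add: DtA_def DxA_def DuA_def pd_ev5)

text \<open>The coefficient phi^x of d/du_x; its total x-derivative enters phi^xx.\<close>
definition prol_ux :: "fun3 \<Rightarrow> fun3 \<Rightarrow> fun3 \<Rightarrow> jfun" where
  "prol_ux \<xi> \<tau> \<phi> p = ev3 (dx \<phi>) p + p jUx * ev3 (du \<phi>) p
     - p jUt * (ev3 (dx \<xi>) p + p jUx * ev3 (du \<xi>) p)
     - p jUx * (ev3 (dx \<tau>) p + p jUx * ev3 (du \<tau>) p)"

lemma prol_coef_coords:
  "prol_coef \<xi> \<tau> \<phi> chi eta jUt p = ev3 (dt \<phi>) p + p jUt * ev3 (du \<phi>) p
     - p jUt * (ev3 (dt \<xi>) p + p jUt * ev3 (du \<xi>) p)
     - p jUx * (ev3 (dt \<tau>) p + p jUt * ev3 (du \<tau>) p)"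
  "prol_coef \<xi> \<tau> \<phi> chi eta jUx p = prol_ux \<xi> \<tau> \<phi> p"
  "prol_coef \<xi> \<tau> \<phi> chi eta jUxx p = Dx (prol_ux \<xi> \<tau> \<phi>) p
     - p jUtx * (ev3 (dx \<xi>) p + p jUx * ev3 (du \<xi>) p)
     - p jUxx * (ev3 (dx \<tau>) p + p jUx * ev3 (du \<tau>) p)"
  "prol_coef \<xi> \<tau> \<phi> chi eta jE p = ev5 chi p"
  "prol_coef \<xi> \<tau> \<phi> chi eta jH p = ev5 eta p"
  "prol_coef \<xi> \<tau> \<phi> chi eta jEx p = ev5 (dx5 chi) p + p jEx * ev5 (dE5 chi) p
     + p jHx * ev5 (dH5 chi) p - p jEt * ev3 (dx \<xi>) p - p jEx * ev3 (dx \<tau>) p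
     - p jEu * ev3 (dx \<phi>) p"
  "prol_coef \<xi> \<tau> \<phi> chi eta jEu p = ev5 (du5 chi) p + p jEu * ev5 (dE5 chi) p
     + p jHu * ev5 (dH5 chi) p - p jEt * ev3 (du \<xi>) p - p jEx * ev3 (du \<tau>) p
     - p jEu * ev3 (du \<phi>) p"
  "prol_coef \<xi> \<tau> \<phi> chi eta jEt p = ev5 (dt5 chi) p + p jEt * ev5 (dE5 chi) p
     + p jHt * ev5 (dH5 chi) p - p jEt * ev3 (dt \<xi>) p - p jEx * ev3 (dt \<tau>) p
     - p jEu * ev3 (dt \<phi>) p"
  "prol_coef \<xi> \<tau> \<phi> chi eta jHt p = ev5 (dt5 eta) p + p jEt * ev5 (dE5 eta) p
     + p jHt * ev5 (dH5 eta) p - p jHt * ev3 (dt \<xi>) p - p jHx * ev3 (dt \<tau>) p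
     - p jHu * ev3 (dt \<phi>) p"
  by (simp_all add: prol_coef_def Let_def total_derivs_ev3 total_derivs_ev5 prol_ux_def[abs_def])

lemma Dx_prol_ux:
  assumes "twice_diff_xu \<xi>" "twice_diff_xu \<tau>" "twice_diff_xu \<phi>"
  shows "Dx (prol_ux \<xi> \<tau> \<phi>) p =
      ev3 (dx (dx \<phi>)) p + p jUx * ev3 (dx (du \<phi>)) p
    - p jUt * (ev3 (dx (dx \<xi>)) p + p jUx * ev3 (dx (du \<xi>)) p)
    - p jUx * (ev3 (dx (dx \<tau>)) p + p jUx * ev3 (dx (du \<tau>)) p)
    + p jUx * (ev3 (du (dx \<phi>)) p + p jUx * ev3 (du (du \<phi>)) p
      - p jUt * (ev3 (du (dx \<xi>)) p + p jUx * ev3 (du (du \<xi>)) p)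
      - p jUx * (ev3 (du (dx \<tau>)) p + p jUx * ev3 (du (du \<tau>)) p))
    - p jUtx * (ev3 (dx \<xi>) p + p jUx * ev3 (du \<xi>) p)
    + p jUxx * (ev3 (du \<phi>) p - p jUt * ev3 (du \<xi>) p
      - (ev3 (dx \<tau>) p + p jUx * ev3 (du \<tau>) p) - p jUx * ev3 (du \<tau>) p)"
proof -
  have H: "has_partials_xu (dx \<xi>)" "has_partials_xu (du \<xi>)" "has_partials_xu (dx \<tau>)"
    "has_partials_xu (du \<tau>)" "has_partials_xu (dx \<phi>)" "has_partials_xu (du \<phi>)"
    using assms by (simp_all add: twice_diff_xu_def)
  note D = has_partials_xuD[OF H(1)] has_partials_xuD[OF H(2)] has_partials_xuD[OF H(3)]
    has_partials_xuD[OF H(4)] has_partials_xuD[OF H(5)] has_partials_xuD[OF H(6)]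
  have dX: "pd jX (prol_ux \<xi> \<tau> \<phi>) p =
      ev3 (dx (dx \<phi>)) p + p jUx * ev3 (dx (du \<phi>)) p
    - p jUt * (ev3 (dx (dx \<xi>)) p + p jUx * ev3 (dx (du \<xi>)) p)
    - p jUx * (ev3 (dx (dx \<tau>)) p + p jUx * ev3 (dx (du \<tau>)) p)"
    by (rule pd_eqI) (auto intro!: derivative_eq_intros D simp: prol_ux_def algebra_simps)
  have dU: "pd jU (prol_ux \<xi> \<tau> \<phi>) p =
      ev3 (du (dx \<phi>)) p + p jUx * ev3 (du (du \<phi>)) p
    - p jUt * (ev3 (du (dx \<xi>)) p + p jUx * ev3 (du (du \<xi>)) p)
    - p jUx * (ev3 (du (dx \<tau>)) p + p jUx * ev3 (du (du \<tau>)) p)"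
    by (rule pd_eqI) (auto intro!: derivative_eq_intros D simp: prol_ux_def algebra_simps)
  have dUt: "pd jUt (prol_ux \<xi> \<tau> \<phi>) p = - (ev3 (dx \<xi>) p + p jUx * ev3 (du \<xi>) p)"
    by (rule pd_eqI) (auto intro!: derivative_eq_intros simp: prol_ux_def algebra_simps)
  have dUx: "pd jUx (prol_ux \<xi> \<tau> \<phi>) p = ev3 (du \<phi>) p - p jUt * ev3 (du \<xi>) p
      - (ev3 (dx \<tau>) p + p jUx * ev3 (du \<tau>) p) - p jUx * ev3 (du \<tau>) p"
    by (rule pd_eqI) (auto intro!: derivative_eq_intros simp: prol_ux_def algebra_simps)
  show ?thesis unfolding Dx_def dX dU dUt dUx by (simp add: algebra_simps)
qed

lemma pd_Delta1:
  "pd jUt Delta1 p = 1"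
  "pd jUx Delta1 p = - (p jEx + 2 * p jEu * p jUx)"
  "pd jUxx Delta1 p = - p jE"
  "pd jE Delta1 p = - p jUxx"
  "pd jH Delta1 p = -1"
  "pd jEx Delta1 p = - p jUx"
  "pd jEu Delta1 p = - (p jUx)\<^sup>2"
  "v \<in> {jT, jX, jU, jUtt, jUtx, jEt, jHt, jHx, jHu} \<Longrightarrow> pd v Delta1 p = 0"
  by (auto intro!: pd_eqI derivative_eq_intros simp: Delta1_def)

lemma pd_Delta23:
  "pd jEt Delta2 p = 1"
  "v \<noteq> jEt \<Longrightarrow> pd v Delta2 p = 0"
  "pd jHt Delta3 p = 1"
  "v \<noteq> jHt \<Longrightarrow> pd v Delta3 p = 0"
  by (auto intro!: pd_eqI derivative_eq_intros simp: Delta2_def Delta3_def)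

lemma prY_Delta1:
  "prY \<xi> \<tau> \<phi> chi eta Delta1 p =
      prol_coef \<xi> \<tau> \<phi> chi eta jUt p
    - (p jEx + 2 * p jEu * p jUx) * prol_coef \<xi> \<tau> \<phi> chi eta jUx p
    - p jE * prol_coef \<xi> \<tau> \<phi> chi eta jUxx p
    - p jUxx * prol_coef \<xi> \<tau> \<phi> chi eta jE p
    - prol_coef \<xi> \<tau> \<phi> chi eta jH p
    - p jUx * prol_coef \<xi> \<tau> \<phi> chi eta jEx p
    - (p jUx)\<^sup>2 * prol_coef \<xi> \<tau> \<phi> chi eta jEu p"
  by (simp add: prY_def all_jv_def pd_Delta1 algebra_simps)

lemma prY_Delta2: "prY \<xi> \<tau> \<phi> chi eta Delta2 p = prol_coef \<xi> \<tau> \<phi> chi eta jEt p"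
  by (simp add: prY_def all_jv_def pd_Delta23)

lemma prY_Delta3: "prY \<xi> \<tau> \<phi> chi eta Delta3 p = prol_coef \<xi> \<tau> \<phi> chi eta jHt p"
  by (simp add: prY_def all_jv_def pd_Delta23)

text \<open>A point of the system with prescribed values of the free jet coordinates
  (u_t is determined by the equation, all t-derivatives of E and H vanish).
  Evaluating the invariance conditions at such points splits them.\<close>
definition sys_point :: "real \<Rightarrow> real \<Rightarrow> real \<Rightarrow> real \<Rightarrow> real \<Rightarrow> real \<Rightarrow> real \<Rightarrow> real \<Rightarrow>
    real \<Rightarrow> real \<Rightarrow> real \<Rightarrow> real \<Rightarrow> jpt" where
  "sys_point t x u ux uxx utx e h ex eu hx hu = (\<lambda>v. case v of
       jT \<Rightarrow> t | jX \<Rightarrow> x | jU \<Rightarrow> u | jUx \<Rightarrow> ux | jUxx \<Rightarrow> uxx | jUtx \<Rightarrow> utx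
     | jE \<Rightarrow> e | jH \<Rightarrow> h | jEx \<Rightarrow> ex | jEu \<Rightarrow> eu | jHx \<Rightarrow> hx | jHu \<Rightarrow> hu
     | jUt \<Rightarrow> e * uxx + ex * ux + eu * ux\<^sup>2 + h | _ \<Rightarrow> 0)"

lemma on_system_sys_point: "on_system (sys_point t x u ux uxx utx e h ex eu hx hu)"
  by (simp add: on_system_def Delta1_def Delta2_def Delta3_def sys_point_def)

section \<open>Splitting into determining equations\<close>

text \<open>Invariance of E_t = 0: the coefficient of d/dE_t vanishes, and splitting with
  respect to E_x and E_u gives chi_t = tau_t = phi_t = 0.\<close>
lemma Delta2_determining_equations:
  assumes "inf_equiv_transf \<xi> \<tau> \<phi> chi eta"
  shows "dt5 chi t x u e h = 0" and "dt \<tau> t x u = 0" and "dt \<phi> t x u = 0"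
proof -
  have cond: "prol_coef \<xi> \<tau> \<phi> chi eta jEt (sys_point t x u 0 0 0 e h ex eu 0 0) = 0" for e h ex eu
    using assms on_system_sys_point by (simp add: inf_equiv_transf_def flip: prY_Delta2)
  have chi_t: "dt5 chi t x u e h = 0" for e h
    using cond[of e h 0 0] by (simp add: prol_coef_coords sys_point_def)
  then show "dt5 chi t x u e h = 0" .
  show "dt \<tau> t x u = 0"
    using cond[of 0 0 1 0] chi_t[of 0 0] by (simp add: prol_coef_coords sys_point_def)
  show "dt \<phi> t x u = 0"
    using cond[of 0 0 0 1] chi_t[of 0 0] by (simp add: prol_coef_coords sys_point_def)
qed

text \<open>Invariance of the equation itself, first part: the coefficient of u_tx gives
  xi_x = xi_u = 0, that of u_x u_xx gives tau_u = 0, that of u_xx gives the form of chi,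
  that of E_x gives phi_x = 0, and the remaining term gives the form of eta.\<close>
lemma Delta1_first_order:
  assumes inf: "inf_equiv_transf \<xi> \<tau> \<phi> chi eta"
    and smooth: "twice_diff_xu \<xi>" "twice_diff_xu \<tau>" "twice_diff_xu \<phi>"
    and tau_t: "\<And>t x u. dt \<tau> t x u = 0" and phi_t: "\<And>t x u. dt \<phi> t x u = 0"
  shows "dx \<xi> t x u = 0" and "du \<xi> t x u = 0" and "du \<tau> t x u = 0" and "dx \<phi> t x u = 0"
    and "chi t x u e h = e * (2 * dx \<tau> t x u - dt \<xi> t x u)"
    and "eta t x u e h = h * (du \<phi> t x u - dt \<xi> t x u)"
proof -
  have "prY \<xi> \<tau> \<phi> chi eta Delta1 (sys_point t x u ux uxx utx e h ex eu hx hu) = 0"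
    for t x u ux uxx utx e h ex eu hx hu
    using inf on_system_sys_point by (simp add: inf_equiv_transf_def)
  note cond = this[unfolded prY_Delta1 prol_coef_coords Dx_prol_ux[OF smooth] prol_ux_def]
  have xi_x: "dx \<xi> t x u = 0" for t x u
    using cond[of t x u 0 0 1 1 0 0 0 0 0] cond[of t x u 0 0 0 1 0 0 0 0 0]
    by (simp add: sys_point_def tau_t phi_t)
  have xi_u: "du \<xi> t x u = 0" for t x u
    using cond[of t x u 1 0 1 1 0 0 0 0 0] cond[of t x u 1 0 0 1 0 0 0 0 0] xi_x
    by (simp add: sys_point_def tau_t phi_t)
  note xi_second =
    partials_of_vanishing[of "dx \<xi>", OF xi_x] partials_of_vanishing[of "du \<xi>", OF xi_u]
  have tau_u: "du \<tau> t x u = 0" for t x u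
    using cond[of t x u 1 1 0 1 0 0 0 0 0] cond[of t x u 1 0 0 1 0 0 0 0 0]
      cond[of t x u 0 1 0 1 0 0 0 0 0] cond[of t x u 0 0 0 1 0 0 0 0 0] xi_x xi_u xi_second
    by (simp add: sys_point_def tau_t phi_t)
  have chi: "chi t x u e h = e * (2 * dx \<tau> t x u - dt \<xi> t x u)" for t x u e h
    using cond[of t x u 0 1 0 e h 0 0 0 0] cond[of t x u 0 0 0 e h 0 0 0 0] xi_x xi_u xi_second tau_u
    by (simp add: sys_point_def tau_t phi_t algebra_simps)
  have phi_x: "dx \<phi> t x u = 0" for t x u
    using cond[of t x u 0 0 0 0 0 1 0 0 0] cond[of t x u 0 0 0 0 0 0 0 0 0] xi_x xi_u xi_second tau_u
    by (simp add: sys_point_def tau_t phi_t)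
  note second =
    partials_of_vanishing[of "dx \<phi>", OF phi_x] partials_of_vanishing[of "du \<tau>", OF tau_u]
  have eta: "eta t x u e h = h * (du \<phi> t x u - dt \<xi> t x u)" for t x u e h
    using cond[of t x u 0 0 0 e h 0 0 0 0] xi_x xi_u xi_second tau_u phi_x second
    by (simp add: sys_point_def tau_t phi_t algebra_simps)
  show "dx \<xi> t x u = 0" "du \<xi> t x u = 0" "du \<tau> t x u = 0" "dx \<phi> t x u = 0"
    "chi t x u e h = e * (2 * dx \<tau> t x u - dt \<xi> t x u)"
    "eta t x u e h = h * (du \<phi> t x u - dt \<xi> t x u)"
    by (fact xi_x xi_u tau_u phi_x chi eta)+
qed

lemma separated_coefficients:
  assumes xi: "Cinf (\<lambda>(t, x, u). \<xi> t x u)" and tau: "Cinf (\<lambda>(t, x, u). \<tau> t x u)"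
    and phi: "Cinf (\<lambda>(t, x, u). \<phi> t x u)"
    and "\<And>t x u. dx \<xi> t x u = 0" "\<And>t x u. du \<xi> t x u = 0"
    and "\<And>t x u. dt \<tau> t x u = 0" "\<And>t x u. du \<tau> t x u = 0"
    and "\<And>t x u. dt \<phi> t x u = 0" "\<And>t x u. dx \<phi> t x u = 0"
  shows "\<xi> = (\<lambda>t x u. \<xi> t 0 0)" and "\<tau> = (\<lambda>t x u. \<tau> 0 x 0)" and "\<phi> = (\<lambda>t x u. \<phi> 0 0 u)"
proof -
  show "\<xi> = (\<lambda>t x u. \<xi> t 0 0)"
  proof (intro ext)
    fix t x u
    have "\<xi> t x u = \<xi> t 0 u"
      using Cinf_dx(1)[OF xi] assms(4) by (rule constant_if_zero_deriv)
    also have "\<dots> = \<xi> t 0 0"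
      using Cinf_du(1)[OF xi] assms(5) by (rule constant_if_zero_deriv)
    finally show "\<xi> t x u = \<xi> t 0 0" .
  qed
  show "\<tau> = (\<lambda>t x u. \<tau> 0 x 0)"
  proof (intro ext)
    fix t x u
    have "\<tau> t x u = \<tau> 0 x u"
      using Cinf_dt(1)[OF tau] assms(6) by (rule constant_if_zero_deriv)
    also have "\<dots> = \<tau> 0 x 0"
      using Cinf_du(1)[OF tau] assms(7) by (rule constant_if_zero_deriv)
    finally show "\<tau> t x u = \<tau> 0 x 0" .
  qed
  show "\<phi> = (\<lambda>t x u. \<phi> 0 0 u)"
  proof (intro ext)
    fix t x u
    have "\<phi> t x u = \<phi> 0 x u"
      using Cinf_dt(1)[OF phi] assms(8) by (rule constant_if_zero_deriv)
    also have "\<dots> = \<phi> 0 0 u"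
      using Cinf_dx(1)[OF phi] assms(9) by (rule constant_if_zero_deriv)
    finally show "\<phi> t x u = \<phi> 0 0 u" .
  qed
qed

text \<open>Invariance of the equation, second part: for separated coefficients the terms in u_x
  and u_x^2 force tau_xx = phi_uu = 0.\<close>
lemma Delta1_second_order:
  assumes inf: "inf_equiv_transf (\<lambda>t x u. Xi t) (\<lambda>t x u. Tau x) (\<lambda>t x u. Phi u)
      (\<lambda>t x u e h. e * (2 * deriv Tau x - k)) (\<lambda>t x u e h. h * (deriv Phi u - k))"
    and smooth: "twice_diff_xu (\<lambda>t x u. Xi t)" "twice_diff_xu (\<lambda>t x u. Tau x)"
      "twice_diff_xu (\<lambda>t x u. Phi u)"
  shows "deriv (deriv Tau) x = 0" and "deriv (deriv Phi) u = 0"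
proof -
  have chi_x: "dx5 (\<lambda>t x u e h. e * (2 * deriv Tau x - k)) t x u e h = 2 * e * deriv (deriv Tau) x"
    for t x u e h
    unfolding dx5_def
    by (rule DERIV_imp_deriv)
      (auto intro!: derivative_eq_intros twice_diff_xu_second_deriv(1)[OF smooth(2)])
  have "prY (\<lambda>t x u. Xi t) (\<lambda>t x u. Tau x) (\<lambda>t x u. Phi u)
      (\<lambda>t x u e h. e * (2 * deriv Tau x - k)) (\<lambda>t x u e h. h * (deriv Phi u - k)) Delta1
      (sys_point t x u ux uxx utx e h ex eu hx hu) = 0"
    for t x u ux uxx utx e h ex eu hx hu
    using inf on_system_sys_point by (simp add: inf_equiv_transf_def)
  note cond = this[unfolded prY_Delta1 prol_coef_coords Dx_prol_ux[OF smooth] prol_ux_def]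
  show "deriv (deriv Tau) x = 0" "deriv (deriv Phi) u = 0"
    using cond[of 0 x u 1 0 0 1 0 0 0 0 0] cond[of 0 x u "-1" 0 0 1 0 0 0 0 0] chi_x
    by (simp_all add: sys_point_def dt_def dx_def du_def du5_def dE5_def dH5_def)
qed

lemma separated_generator_if_equivalence:
  assumes xi: "Cinf (\<lambda>(t, x, u). \<xi> t x u)" and tau: "Cinf (\<lambda>(t, x, u). \<tau> t x u)"
    and phi: "Cinf (\<lambda>(t, x, u). \<phi> t x u)"
    and chi_smooth: "Cinf (\<lambda>(t, x, u, e, h). chi t x u e h)"
    and inf: "inf_equiv_transf \<xi> \<tau> \<phi> chi eta"
  obtains Xi Tau Phi k
  where "\<xi> = (\<lambda>t x u. Xi t)" "\<tau> = (\<lambda>t x u. Tau x)" "\<phi> = (\<lambda>t x u. Phi u)"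
    and "chi = (\<lambda>t x u e h. e * (2 * deriv Tau x - k))"
    and "eta = (\<lambda>t x u e h. h * (deriv Phi u - k))"
    and "\<And>t. (Xi has_real_derivative k) (at t)"
    and "\<And>x. (Tau has_real_derivative deriv Tau x) (at x)"
    and "\<And>u. (Phi has_real_derivative deriv Phi u) (at u)"
proof -
  have smooth: "twice_diff_xu \<xi>" "twice_diff_xu \<tau>" "twice_diff_xu \<phi>"
    by (fact twice_diff_xu_if_Cinf[OF xi] twice_diff_xu_if_Cinf[OF tau]
        twice_diff_xu_if_Cinf[OF phi])+
  note Delta2 = Delta2_determining_equations[OF inf]
  note first = Delta1_first_order[OF inf smooth Delta2(2,3)]
  define Xi where "Xi t = \<xi> t 0 0" for t
  define Tau where "Tau x = \<tau> 0 x 0" for x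
  define Phi where "Phi u = \<phi> 0 0 u" for u
  have sep: "\<xi> = (\<lambda>t x u. Xi t)" "\<tau> = (\<lambda>t x u. Tau x)" "\<phi> = (\<lambda>t x u. Phi u)"
    using separated_coefficients[OF xi tau phi first(1,2) Delta2(2) first(3) Delta2(3) first(4)]
    by (simp_all add: Xi_def Tau_def Phi_def)
  define k where "k = deriv Xi 0"
  have Xi'_const: "deriv Xi t = k" for t
  proof -
    have "chi t 0 0 1 0 = chi 0 0 0 1 0"
      using Cinf_dt5[OF chi_smooth] Delta2(1) by (rule constant_if_zero_deriv)
    then show ?thesis using first(5)[of t 0 0 1 0] first(5)[of 0 0 0 1 0]
      by (simp add: sep dt_def dx_def k_def)
  qed
  show thesis
  proof (rule that[OF sep])
    show "chi = (\<lambda>t x u e h. e * (2 * deriv Tau x - k))"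
      using first(5) by (simp add: fun_eq_iff sep dt_def dx_def Xi'_const)
    show "eta = (\<lambda>t x u e h. h * (deriv Phi u - k))"
      using first(6) by (simp add: fun_eq_iff sep dt_def du_def Xi'_const)
    show "(Xi has_real_derivative k) (at t)" for t
      using Cinf_dt(1)[OF xi, of 0 0 t] Xi'_const[of t] by (simp add: sep dt_def)
    show "(Tau has_real_derivative deriv Tau x) (at x)" for x
      using Cinf_dx(1)[OF tau, of 0 0 x] by (simp add: sep dx_def)
    show "(Phi has_real_derivative deriv Phi u) (at u)" for u
      using Cinf_du(1)[OF phi, of 0 0 u] by (simp add: sep du_def)
  qed
qed

text \<open>Every infinitesimal equivalence transformation lies in the span of Y_1, ..., Y_6:
  the second-order determining equations make Tau and Phi affine.\<close>
lemma generator_form_if_equivalence: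
  assumes xi: "Cinf (\<lambda>(t, x, u). \<xi> t x u)" and tau: "Cinf (\<lambda>(t, x, u). \<tau> t x u)"
    and phi: "Cinf (\<lambda>(t, x, u). \<phi> t x u)"
    and chi_smooth: "Cinf (\<lambda>(t, x, u, e, h). chi t x u e h)"
    and inf: "inf_equiv_transf \<xi> \<tau> \<phi> chi eta"
  shows "\<exists>c1 c2 c3 c4 c5 c6 :: real.
       (\<forall>t x u. \<xi> t x u = c1 + c4 * (2 * t) + c5 * (- t)) \<and>
       (\<forall>t x u. \<tau> t x u = c2 + c4 * x) \<and>
       (\<forall>t x u. \<phi> t x u = c3 + c6 * u) \<and>
       (\<forall>t x u e h. chi t x u e h = c5 * e) \<and>
       (\<forall>t x u e h. eta t x u e h = c4 * (- 2 * h) + c5 * h + c6 * h)"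
proof (rule separated_generator_if_equivalence[OF xi tau phi chi_smooth inf])
  fix Xi Tau Phi k
  assume sep: "\<xi> = (\<lambda>t x u. Xi t)" "\<tau> = (\<lambda>t x u. Tau x)" "\<phi> = (\<lambda>t x u. Phi u)"
    and chi: "chi = (\<lambda>t x u e h. e * (2 * deriv Tau x - k))"
    and eta: "eta = (\<lambda>t x u e h. h * (deriv Phi u - k))"
    and Xi': "\<And>t. (Xi has_real_derivative k) (at t)"
    and Tau': "\<And>x. (Tau has_real_derivative deriv Tau x) (at x)"
    and Phi': "\<And>u. (Phi has_real_derivative deriv Phi u) (at u)"
  have smooth: "twice_diff_xu (\<lambda>t x u. Xi t)" "twice_diff_xu (\<lambda>t x u. Tau x)"
    "twice_diff_xu (\<lambda>t x u. Phi u)"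
    using twice_diff_xu_if_Cinf[OF xi] twice_diff_xu_if_Cinf[OF tau] twice_diff_xu_if_Cinf[OF phi]
    by (simp_all add: sep)
  note second_order = Delta1_second_order[OF inf[unfolded sep chi eta] smooth]
  have Tau'_const: "deriv Tau x = deriv Tau 0" for x
    using twice_diff_xu_second_deriv(1)[OF smooth(2)] second_order(1)
    by (rule constant_if_zero_deriv)
  have Phi'_const: "deriv Phi u = deriv Phi 0" for u
    using twice_diff_xu_second_deriv(2)[OF smooth(3)] second_order(2)
    by (rule constant_if_zero_deriv)
  have Tau_affine: "Tau x = Tau 0 + deriv Tau 0 * x" for x
    using Tau' Tau'_const by (intro affine_if_const_deriv) metis
  have Phi_affine: "Phi u = Phi 0 + deriv Phi 0 * u" for u
    using Phi' Phi'_const by (intro affine_if_const_deriv) metis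
  have Xi_affine: "Xi t = Xi 0 + k * t" for t
    using Xi' by (rule affine_if_const_deriv)
  show ?thesis
  proof (intro exI conjI allI)
    fix t x u e h
    show "\<xi> t x u = Xi 0 + deriv Tau 0 * (2 * t) + (2 * deriv Tau 0 - k) * (- t)"
      using Xi_affine[of t] by (simp add: sep algebra_simps)
    show "\<tau> t x u = Tau 0 + deriv Tau 0 * x"
      using Tau_affine[of x] by (simp add: sep)
    show "\<phi> t x u = Phi 0 + deriv Phi 0 * u"
      using Phi_affine[of u] by (simp add: sep)
    show "chi t x u e h = (2 * deriv Tau 0 - k) * e"
      using Tau'_const[of x] by (simp add: chi)
    show "eta t x u e h = deriv Tau 0 * (- 2 * h) + (2 * deriv Tau 0 - k) * h + deriv Phi 0 * h"
      using Phi'_const[of u] by (simp add: eta algebra_simps)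
  qed
qed

lemma equivalence_if_generator_form:
  assumes "\<exists>c1 c2 c3 c4 c5 c6 :: real.
       (\<forall>t x u. \<xi> t x u = c1 + c4 * (2 * t) + c5 * (- t)) \<and>
       (\<forall>t x u. \<tau> t x u = c2 + c4 * x) \<and>
       (\<forall>t x u. \<phi> t x u = c3 + c6 * u) \<and>
       (\<forall>t x u e h. chi t x u e h = c5 * e) \<and>
       (\<forall>t x u e h. eta t x u e h = c4 * (- 2 * h) + c5 * h + c6 * h)"
  shows "inf_equiv_transf \<xi> \<tau> \<phi> chi eta"
proof -
  from assms obtain c1 c2 c3 c4 c5 c6 where c:
    "\<forall>t x u. \<xi> t x u = c1 + c4 * (2 * t) + c5 * (- t)" "\<forall>t x u. \<tau> t x u = c2 + c4 * x"
    "\<forall>t x u. \<phi> t x u = c3 + c6 * u" "\<forall>t x u e h. chi t x u e h = c5 * e"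
    "\<forall>t x u e h. eta t x u e h = c4 * (- 2 * h) + c5 * h + c6 * h"
    by (elim exE conjE) blast
  have xi: "\<xi> = (\<lambda>t x u. c1 + (2 * c4 - c5) * t)"
    using c(1) by (simp add: fun_eq_iff algebra_simps)
  have tau: "\<tau> = (\<lambda>t x u. c2 + c4 * x)" and phi: "\<phi> = (\<lambda>t x u. c3 + c6 * u)"
    and chi: "chi = (\<lambda>t x u e h. c5 * e)"
    using c(2-4) by (simp_all add: fun_eq_iff)
  have eta: "eta = (\<lambda>t x u e h. (c6 + c5 - 2 * c4) * h)"
    using c(5) by (simp add: fun_eq_iff algebra_simps)
  have smooth: "twice_diff_xu \<xi>" "twice_diff_xu \<tau>" "twice_diff_xu \<phi>"
    by (simp_all add: xi tau phi twice_diff_xu_def has_partials_xu_def dx_def du_def deriv_affine)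
  show ?thesis
    unfolding inf_equiv_transf_def
  proof (intro allI impI conjI)
    fix p
    assume "on_system p"
    then have ut: "p jUt = p jE * p jUxx + p jEx * p jUx + p jEu * (p jUx)\<^sup>2 + p jH"
      and Et: "p jEt = 0" and Ht: "p jHt = 0"
      by (auto simp: on_system_def Delta1_def Delta2_def Delta3_def)
    show "prY \<xi> \<tau> \<phi> chi eta Delta1 p = 0"
      unfolding prY_Delta1 prol_coef_coords Dx_prol_ux[OF smooth] prol_ux_def
      by (simp add: xi tau phi chi eta dt_def dx_def du_def dx5_def du5_def dE5_def dH5_def
          deriv_affine ut) algebra
    show "prY \<xi> \<tau> \<phi> chi eta Delta2 p = 0"
      unfolding prY_Delta2 prol_coef_coords
      by (simp add: xi tau phi chi dt_def dt5_def dE5_def dH5_def deriv_affine Et Ht)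
    show "prY \<xi> \<tau> \<phi> chi eta Delta3 p = 0"
      unfolding prY_Delta3 prol_coef_coords
      by (simp add: xi tau phi eta dt_def dt5_def dE5_def dH5_def deriv_affine Et Ht)
  qed
qed

theorem mainTheorem2:
  fixes \<xi> \<tau> \<phi> :: "real \<Rightarrow> real \<Rightarrow> real \<Rightarrow> real"
    and chi eta :: "real \<Rightarrow> real \<Rightarrow> real \<Rightarrow> real \<Rightarrow> real \<Rightarrow> real"
  assumes "Cinf (\<lambda>(t::real, x::real, u::real). \<xi> t x u)"
    and "Cinf (\<lambda>(t::real, x::real, u::real). \<tau> t x u)"
    and "Cinf (\<lambda>(t::real, x::real, u::real). \<phi> t x u)"
    and "Cinf (\<lambda>(t::real, x::real, u::real, e::real, h::real). chi t x u e h)"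
    and "Cinf (\<lambda>(t::real, x::real, u::real, e::real, h::real). eta t x u e h)"
  shows "inf_equiv_transf \<xi> \<tau> \<phi> chi eta \<longleftrightarrow>
    (\<exists>c1 c2 c3 c4 c5 c6 :: real.
       (\<forall>t x u. \<xi> t x u = c1 + c4 * (2 * t) + c5 * (- t)) \<and>
       (\<forall>t x u. \<tau> t x u = c2 + c4 * x) \<and>
       (\<forall>t x u. \<phi> t x u = c3 + c6 * u) \<and>
       (\<forall>t x u e h. chi t x u e h = c5 * e) \<and>
       (\<forall>t x u e h. eta t x u e h = c4 * (- 2 * h) + c5 * h + c6 * h))"
  by (rule iffI[OF generator_form_if_equivalence[OF assms(1-4)] equivalence_if_generator_form])

end
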